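(* For $n\geq 0$ let \[ F_n=\sum_{T}\frac{(n+1)!}{2^n}\prod_{v\in T}\left(1+\frac{1}{h(v)}\right), \] the sum ranging over all binary trees $T$ with $n$ vertices (so $F_0=1$, the empty tree contributing an empty product). Then for every $n\geq 1$, \[ F_n=\frac{n+1}{2n}\sum_{k=0}^{n-1}\binom{n+1}{k+1}F_kF_{n-k-1}. \]
   Context: A binary tree is a rooted tree in which each vertex has a left subtree and a right subtree, each possibly empty; binary trees differing in whether a child is a left or a right child are distinct. For a vertex $v$ of a binary tree $T$, the hook length $h(v)$ is the number of descendants of $v$ in $T$, including $v$ itself. *)

theory Defs
  imports Complex_Main "HOL-Library.Tree"
begin

text \<open>Binary trees are unlabelled: unit tree (Leaf is the empty tree, Node l () r a vertex
with left subtree l and right subtree r).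
The hook length of the root of Node l x r is the size of that subtree.
hook_prod t is the product over all vertices v of t of (1 + 1/h(v)).\<close>

fun hook_prod :: "unit tree \<Rightarrow> real" where
  "hook_prod Leaf = 1"
| "hook_prod (Node l x r) =
     (1 + 1 / real (size (Node l x r))) * hook_prod l * hook_prod r"

definition binary_trees :: "nat \<Rightarrow> unit tree set" where
  "binary_trees n = {t. size t = n}"

definition F :: "nat \<Rightarrow> real" where
  "F n = (\<Sum>t\<in>binary_trees n. fact (n + 1) / 2 ^ n * hook_prod t)"

end

theory Submission
  imports Defs
begin

text \<open>Deleting the root splits a binary tree with m + 1 vertices into a left subtree with
k \<le> m vertices and a right subtree with m - k vertices, while the root itself has hook length
m + 1. So the sums G(n) of the hook products over all trees with n vertices satisfy
G(m + 1) = (1 + 1/(m + 1)) (sum over k of G(k) G(m - k)). The normalisation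
F(n) = (n + 1)!/2^n G(n) is such that binom(m + 2, k + 1) F(k) F(m - k) = (m + 2)!/2^m G(k) G(m - k),
which turns this into the stated recursion.\<close>

definition hook_sum :: "nat \<Rightarrow> real" where
  "hook_sum n = (\<Sum>t\<in>binary_trees n. hook_prod t)"

lemma F_eq_hook_sum: "F n = fact (n + 1) / 2 ^ n * hook_sum n"
  unfolding F_def hook_sum_def by (simp add: sum_distrib_left)

lemma binary_trees_0: "binary_trees 0 = {Leaf}"
  unfolding binary_trees_def by auto

lemma binary_trees_Suc:
  "binary_trees (Suc m) =
    (\<Union>k\<le>m. (\<lambda>(l, r). Node l () r) ` (binary_trees k \<times> binary_trees (m - k)))"
proof (rule set_eqI)
  fix t :: "unit tree"
  show "t \<in> binary_trees (Suc m) \<longleftrightarrow>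
    t \<in> (\<Union>k\<le>m. (\<lambda>(l, r). Node l () r) ` (binary_trees k \<times> binary_trees (m - k)))"
  proof (cases t)
    case (Node l x r)
    then show ?thesis
      by (auto simp: binary_trees_def intro!: bexI[of _ "size l"] image_eqI[of _ _ "(l, r)"])
  qed (auto simp: binary_trees_def)
qed

lemma finite_binary_trees: "finite (binary_trees n)"
proof (induction n rule: less_induct)
  case (less n)
  show ?case
  proof (cases n)
    case 0
    then show ?thesis by (simp add: binary_trees_0)
  next
    case (Suc m)
    then show ?thesis
      unfolding Suc binary_trees_Suc using less Suc
      by (intro finite_UN_I finite_imageI finite_cartesian_product) auto
  qed
qed

lemma sum_binary_trees_Suc:
  "(\<Sum>t\<in>binary_trees (Suc m). w t) =
    (\<Sum>k\<le>m. \<Sum>l\<in>binary_trees k. \<Sum>r\<in>binary_trees (m - k). w (Node l () r))"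
proof -
  let ?node = "\<lambda>(l, r). Node l () r :: unit tree"
  have "(\<Sum>t\<in>binary_trees (Suc m). w t) =
      (\<Sum>k\<le>m. \<Sum>t\<in>?node ` (binary_trees k \<times> binary_trees (m - k)). w t)"
    unfolding binary_trees_Suc
    by (rule sum.UNION_disjoint)
      (auto simp: finite_binary_trees intro!: finite_imageI, auto simp: binary_trees_def)
  also have "\<dots> = (\<Sum>k\<le>m. \<Sum>p\<in>binary_trees k \<times> binary_trees (m - k). w (?node p))"
    by (intro sum.cong refl sum.reindex_cong[OF _ refl refl]) (auto simp: inj_on_def)
  also have "\<dots> = (\<Sum>k\<le>m. \<Sum>l\<in>binary_trees k. \<Sum>r\<in>binary_trees (m - k). w (Node l () r))"
    by (simp add: sum.cartesian_product split_def)
  finally show ?thesis .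
qed

lemma hook_sum_Suc:
  "hook_sum (Suc m) = (1 + 1 / real (Suc m)) * (\<Sum>k\<le>m. hook_sum k * hook_sum (m - k))"
proof -
  have product: "hook_sum k * hook_sum (m - k) =
      (\<Sum>l\<in>binary_trees k. \<Sum>r\<in>binary_trees (m - k). hook_prod l * hook_prod r)" for k
    unfolding hook_sum_def by (rule sum_product)
  have "hook_sum (Suc m) = (\<Sum>k\<le>m. \<Sum>l\<in>binary_trees k. \<Sum>r\<in>binary_trees (m - k).
      (1 + 1 / real (Suc m)) * (hook_prod l * hook_prod r))"
    unfolding hook_sum_def sum_binary_trees_Suc
    by (intro sum.cong refl) (auto simp: binary_trees_def)
  then show ?thesis
    by (simp only: product sum_distrib_left)
qed

lemma binomial_F_product:
  assumes "k \<le> m"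
  shows "real (Suc (Suc m) choose Suc k) * F k * F (m - k) =
    fact (Suc (Suc m)) / 2 ^ m * (hook_sum k * hook_sum (m - k))"
proof -
  have binomial: "real (Suc (Suc m) choose Suc k) =
      fact (Suc (Suc m)) / (fact (Suc k) * fact (Suc (m - k)))"
    using assms by (subst binomial_fact) (auto simp: Suc_diff_le)
  have "(2::real) ^ k * 2 ^ (m - k) = 2 ^ m"
    using assms by (simp flip: power_add)
  then show ?thesis
    unfolding binomial F_eq_hook_sum Suc_eq_plus1[symmetric]
    by (simp add: field_simps del: fact_Suc)
qed

theorem mainTheorem2:
  fixes n :: nat
  assumes "n \<ge> 1"
  shows "F n = real (n + 1) / real (2 * n) *
    (\<Sum>k = 0..n - 1. real ((n + 1) choose (k + 1)) * F k * F (n - k - 1))"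
proof -
  obtain m where n: "n = Suc m" using assms by (cases n) auto
  define S where "S = (\<Sum>k\<le>m. hook_sum k * hook_sum (m - k))"
  have "(\<Sum>k = 0..n - 1. real ((n + 1) choose (k + 1)) * F k * F (n - k - 1)) =
      (\<Sum>k\<le>m. fact (Suc (Suc m)) / 2 ^ m * (hook_sum k * hook_sum (m - k)))"
    using binomial_F_product by (auto simp: n atLeast0AtMost intro!: sum.cong)
  also have "\<dots> = fact (Suc (Suc m)) / 2 ^ m * S"
    unfolding S_def by (simp add: sum_distrib_left)
  finally have sum_eq: "(\<Sum>k = 0..n - 1. real ((n + 1) choose (k + 1)) * F k * F (n - k - 1)) =
      fact (Suc (Suc m)) / 2 ^ m * S" .
  have "F n = fact (Suc (Suc m)) / 2 ^ Suc m * ((1 + 1 / real (Suc m)) * S)"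
    unfolding F_eq_hook_sum n hook_sum_Suc S_def by simp
  then show ?thesis
    unfolding sum_eq by (simp add: n field_simps del: fact_Suc)
qed

end
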